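(* Let $\mathcal{A}:\mathbb{C}^{m\times n}\to\mathbb{C}^p$ be linear with rank-restricted isometry constant $\delta_r(\mathcal{A})$, let $\Psi\subset\mathbb{O}$ be a set of atoms with $|\Psi|\le r$, and let $\mathcal{P}:\mathbb{C}^{m\times n}\to\mathbb{C}^{m\times n}$ be an orthogonal projection operator that commutes with $\mathcal{P}_\Psi$. Then $$(1-\delta_r(\mathcal{A}))\|\mathcal{P}\mathcal{P}_\Psi X\|_F\le\|\mathcal{P}\mathcal{P}_\Psi\mathcal{A}^*\mathcal{A}\mathcal{P}\mathcal{P}_\Psi X\|_F\quad\text{for all }X\in\mathbb{C}^{m\times n}.$$
   Context: $\mathbb{C}^p$ has inner product $\langle x,y\rangle=y^Hx$ and norm $\|\cdot\|_2$; $\mathbb{C}^{m\times n}$ has inner product $\langle X,Y\rangle=\mathrm{tr}(Y^HX)$ and Frobenius norm $\|\cdot\|_F$; $\mathcal{A}^*$ is the adjoint of $\mathcal{A}$. $\delta_r(\mathcal{A})$ is the smallest $\delta\ge0$ such that $(1-\delta)\|X\|_F^2\le\|\mathcal{A}X\|_2^2\le(1+\delta)\|X\|_F^2$ for all $X$ with $\mathrm{rank}(X)\le r$. The set of atoms $\mathbb{O}$ is a set of unit-Frobenius-norm rank-one matrices in $\mathbb{C}^{m\times n}$ such that every nonzero rank-one matrix is a scalar multiple of exactly one element of $\mathbb{O}$. For $\Psi\subset\mathbb{O}$, $\mathcal{P}_\Psi$ is the orthogonal projection of $\mathbb{C}^{m\times n}$ onto $\mathrm{span}(\Psi)$. *)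

theory Defs
  imports "HOL-Analysis.Analysis"
begin

(* Matrices in C^{m x n} are rendered as complex^'n^'m (rows indexed by 'm, columns by 'n);
   vectors in C^p as complex^'p. Dimensions are arbitrary finite index types. *)

definition mscale :: "complex \<Rightarrow> complex^'n^'m \<Rightarrow> complex^'n^'m" where
  "mscale c X = (\<chi> i j. c * X $ i $ j)"

definition frob_inner :: "complex^'n^'m \<Rightarrow> complex^'n^'m \<Rightarrow> complex" where
  "frob_inner X Y = (\<Sum>i\<in>UNIV. \<Sum>j\<in>UNIV. X $ i $ j * cnj (Y $ i $ j))"

definition frob_norm :: "complex^'n^'m \<Rightarrow> real" where
  "frob_norm X = sqrt (\<Sum>i\<in>UNIV. \<Sum>j\<in>UNIV. (cmod (X $ i $ j))\<^sup>2)"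

definition vinner :: "complex^'p \<Rightarrow> complex^'p \<Rightarrow> complex" where
  "vinner x y = (\<Sum>i\<in>UNIV. x $ i * cnj (y $ i))"

definition vnorm :: "complex^'p \<Rightarrow> real" where
  "vnorm x = sqrt (\<Sum>i\<in>UNIV. (cmod (x $ i))\<^sup>2)"

definition clinear_op :: "(complex^'n^'m \<Rightarrow> complex^'p) \<Rightarrow> bool" where
  "clinear_op A \<longleftrightarrow> (\<forall>X Y. A (X + Y) = A X + A Y) \<and> (\<forall>c X. A (mscale c X) = c *s A X)"

definition clinear_mop :: "(complex^'n^'m \<Rightarrow> complex^'n^'m) \<Rightarrow> bool" where
  "clinear_mop P \<longleftrightarrow> (\<forall>X Y. P (X + Y) = P X + P Y) \<and> (\<forall>c X. P (mscale c X) = mscale c (P X))"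

definition adjoint_op :: "(complex^'n^'m \<Rightarrow> complex^'p) \<Rightarrow> complex^'p \<Rightarrow> complex^'n^'m" where
  "adjoint_op A y = (THE Z. \<forall>X. vinner (A X) y = frob_inner X Z)"

definition ric :: "(complex^'n^'m \<Rightarrow> complex^'p) \<Rightarrow> nat \<Rightarrow> real" where
  "ric A r = Inf {\<delta>. \<delta> \<ge> 0 \<and> (\<forall>X::complex^'n^'m. rank X \<le> r \<longrightarrow>
      (1 - \<delta>) * (frob_norm X)\<^sup>2 \<le> (vnorm (A X))\<^sup>2 \<and> (vnorm (A X))\<^sup>2 \<le> (1 + \<delta>) * (frob_norm X)\<^sup>2)}"

definition atom_set :: "(complex^'n^'m) set \<Rightarrow> bool" where
  "atom_set Ats \<longleftrightarrow> (\<forall>U\<in>Ats. rank U = 1 \<and> frob_norm U = 1) \<and>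
     (\<forall>X::complex^'n^'m. X \<noteq> 0 \<and> rank X = 1 \<longrightarrow> (\<exists>!U. U \<in> Ats \<and> (\<exists>c. X = mscale c U)))"

definition cspan :: "(complex^'n^'m) set \<Rightarrow> (complex^'n^'m) set" where
  "cspan S = {X. \<exists>F c. finite F \<and> F \<subseteq> S \<and> X = (\<Sum>U\<in>F. mscale (c U) U)}"

definition orth_proj_onto :: "(complex^'n^'m) set \<Rightarrow> complex^'n^'m \<Rightarrow> complex^'n^'m" where
  "orth_proj_onto V X = (THE Y. Y \<in> V \<and> (\<forall>Z\<in>V. frob_inner (X - Y) Z = 0))"

definition proj_atoms :: "(complex^'n^'m) set \<Rightarrow> complex^'n^'m \<Rightarrow> complex^'n^'m" where
  "proj_atoms \<Psi> = orth_proj_onto (cspan \<Psi>)"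

definition is_orth_projection :: "(complex^'n^'m \<Rightarrow> complex^'n^'m) \<Rightarrow> bool" where
  "is_orth_projection P \<longleftrightarrow> clinear_mop P \<and> (\<forall>X. P (P X) = P X) \<and>
     (\<forall>X Y. frob_inner (P X) Y = frob_inner X (P Y))"

end

theory Submission
  imports Defs
begin

(*
  View C^(m x n) as a real inner product space: the Frobenius norm is the library norm and the
  library inner product is the real part of the Frobenius one. On a subspace closed under
  multiplication by i, complex and real orthogonality coincide, so P_Psi is the real orthogonal
  projection onto span Psi. Since P commutes with P_Psi, Y = P P_Psi X lies in span Psi, hence has
  rank at most |Psi| <= r, and is fixed by both projections. Self-adjointness then gives
    <P P_Psi A^* A Y, Y> = <A^* A Y, Y> = ||A Y||^2 >= (1 - delta_r) ||Y||^2,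
  and Cauchy-Schwarz yields the claim.
*)

lemma frob_norm_eq_norm: "frob_norm X = norm X"
  unfolding frob_norm_def norm_vec_def L2_set_def by (simp add: sum_nonneg)

lemma vnorm_eq_norm: "vnorm x = norm x"
  unfolding vnorm_def norm_vec_def L2_set_def by simp

lemma Re_frob_inner: "Re (frob_inner X Y) = X \<bullet> Y"
  unfolding frob_inner_def inner_vec_def by (simp add: Re_sum inner_complex_def)

lemma Re_vinner: "Re (vinner x y) = x \<bullet> y"
  unfolding vinner_def inner_vec_def by (simp add: Re_sum inner_complex_def)

lemma mscale_of_real: "mscale (complex_of_real c) X = c *\<^sub>R X"
  by (simp add: mscale_def vec_eq_iff, simp add: scaleR_conv_of_real)

lemma vector_scalar_mult_of_real: "complex_of_real c *s x = c *\<^sub>R x"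
  by (simp add: vec_eq_iff, simp add: scaleR_conv_of_real)

lemma mscale_zero_left [simp]: "mscale 0 X = 0"
  by (simp add: mscale_def vec_eq_iff)

lemma mscale_add_left: "mscale (a + b) X = mscale a X + mscale b X"
  by (simp add: mscale_def vec_eq_iff distrib_right)

lemma mscale_mscale: "mscale a (mscale b X) = mscale (a * b) X"
  by (simp add: mscale_def vec_eq_iff mult.assoc)

lemma mscale_sum: "mscale a (\<Sum>U\<in>F. f U) = (\<Sum>U\<in>F. mscale a (f U))"
  by (induction F rule: infinite_finite_induct) (simp_all add: mscale_def vec_eq_iff distrib_left)

lemma frob_inner_mscale_left: "frob_inner (mscale c X) Y = c * frob_inner X Y"
  by (simp add: frob_inner_def mscale_def sum_distrib_left mult.assoc)

lemma frob_inner_mscale_right: "frob_inner X (mscale c Y) = cnj c * frob_inner X Y"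
  by (simp add: frob_inner_def mscale_def sum_distrib_left mult_ac)

lemma frob_inner_eq_0_iff: "frob_inner X Y = 0 \<longleftrightarrow> X \<bullet> Y = 0 \<and> X \<bullet> mscale \<i> Y = 0"
  by (simp flip: Re_frob_inner add: frob_inner_mscale_right complex_eq_iff)

lemma clinear_op_imp_linear: "clinear_op A \<Longrightarrow> linear A"
  unfolding clinear_op_def
  by (rule linearI) (auto simp flip: mscale_of_real vector_scalar_mult_of_real)

lemma is_orth_projection_inner_commute:
  "is_orth_projection P \<Longrightarrow> P X \<bullet> Y = X \<bullet> P Y"
  unfolding is_orth_projection_def by (metis Re_frob_inner)

lemma adjoint_op_eq_adjoint:
  assumes "clinear_op A"
  shows "adjoint_op A y = adjoint A y"
proof -
  have lin: "linear A" using assms by (rule clinear_op_imp_linear)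
  have real_part: "Re (vinner (A X) y) = Re (frob_inner X (adjoint A y))" for X
    by (simp add: Re_frob_inner Re_vinner adjoint_works[OF lin])
  have adj: "vinner (A X) y = frob_inner X (adjoint A y)" for X
  proof -
    \<comment> \<open>The imaginary parts agree because the real parts do at \<open>\<i> X\<close>.\<close>
    have "Re (\<i> * vinner (A X) y) = Re (vinner (A (mscale \<i> X)) y)"
      using assms by (simp add: clinear_op_def vinner_def sum_distrib_left mult.assoc)
    also have "\<dots> = Re (\<i> * frob_inner X (adjoint A y))"
      by (simp only: real_part frob_inner_mscale_left)
    finally show ?thesis using real_part[of X] by (simp add: complex_eq_iff)
  qed
  show ?thesis unfolding adjoint_op_def
  proof (rule the_equality)
    show "\<forall>X. vinner (A X) y = frob_inner X (adjoint A y)" using adj by blast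
  next
    fix Z assume "\<forall>X. vinner (A X) y = frob_inner X Z"
    then have "X \<bullet> (Z - adjoint A y) = 0" for X
      using adj by (metis Re_frob_inner inner_diff_right right_minus_eq)
    then show "Z = adjoint A y" by (metis inner_eq_zero_iff right_minus_eq)
  qed
qed

context
  fixes V :: "(complex^'n^'m) set"
  assumes V_subspace: "subspace V"
    and V_mscale_ii: "\<And>Z. Z \<in> V \<Longrightarrow> mscale \<i> Z \<in> V"
begin

lemma orth_proj_onto_eqI:
  assumes "Y \<in> V" and "\<And>Z. Z \<in> V \<Longrightarrow> (X - Y) \<bullet> Z = 0"
  shows "orth_proj_onto V X = Y"
  unfolding orth_proj_onto_def
proof (rule the_equality)
  show "Y \<in> V \<and> (\<forall>Z\<in>V. frob_inner (X - Y) Z = 0)"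
    using assms V_mscale_ii by (simp add: frob_inner_eq_0_iff)
next
  fix Y' assume Y': "Y' \<in> V \<and> (\<forall>Z\<in>V. frob_inner (X - Y') Z = 0)"
  then have D: "Y - Y' \<in> V" using assms(1) V_subspace by (simp add: subspace_diff)
  have "(Y - Y') \<bullet> (Y - Y') = (X - Y') \<bullet> (Y - Y') - (X - Y) \<bullet> (Y - Y')"
    by (simp add: inner_diff_left)
  also have "\<dots> = 0" using Y' D assms(2) by (simp add: frob_inner_eq_0_iff)
  finally show "Y' = Y" by simp
qed

lemma orth_proj_onto_in_orthogonal:
  "orth_proj_onto V X \<in> V \<and> (\<forall>Z\<in>V. (X - orth_proj_onto V X) \<bullet> Z = 0)"
proof -
  obtain Y W where "Y \<in> span V" "\<And>Z. Z \<in> span V \<Longrightarrow> orthogonal W Z" "X = Y + W"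
    using orthogonal_subspace_decomp_exists by metis
  moreover have "span V = V" using V_subspace by (simp add: span_eq_iff)
  ultimately have "Y \<in> V" "\<And>Z. Z \<in> V \<Longrightarrow> (X - Y) \<bullet> Z = 0"
    by (simp_all add: orthogonal_def)
  then show ?thesis using orth_proj_onto_eqI by simp
qed

lemma orth_proj_onto_fixes: "Y \<in> V \<Longrightarrow> orth_proj_onto V Y = Y"
  by (rule orth_proj_onto_eqI) simp_all

lemma orth_proj_onto_inner_commute:
  "orth_proj_onto V X \<bullet> Y = X \<bullet> orth_proj_onto V Y"
proof -
  let ?Q = "orth_proj_onto V"
  have "?Q X \<bullet> Y = ?Q X \<bullet> ?Q Y + (Y - ?Q Y) \<bullet> ?Q X"
    by (simp add: inner_diff_left inner_diff_right inner_commute)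
  also have "\<dots> = ?Q X \<bullet> ?Q Y + (X - ?Q X) \<bullet> ?Q Y"
    using orth_proj_onto_in_orthogonal by simp
  also have "\<dots> = X \<bullet> ?Q Y" by (simp add: inner_diff_left)
  finally show ?thesis .
qed

end

lemma cspan_finite:
  assumes "finite S"
  shows "cspan S = range (\<lambda>c. \<Sum>U\<in>S. mscale (c U) U)"
proof
  show "cspan S \<subseteq> range (\<lambda>c. \<Sum>U\<in>S. mscale (c U) U)"
  proof
    fix X assume "X \<in> cspan S"
    then obtain F c where F: "finite F" "F \<subseteq> S" "X = (\<Sum>U\<in>F. mscale (c U) U)"
      by (auto simp: cspan_def)
    let ?c = "\<lambda>U. if U \<in> F then c U else 0"
    have "X = (\<Sum>U\<in>F. mscale (?c U) U)" using F(3) by simp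
    also have "\<dots> = (\<Sum>U\<in>S. mscale (?c U) U)"
      by (rule sum.mono_neutral_left) (use assms F in auto)
    finally show "X \<in> range (\<lambda>c. \<Sum>U\<in>S. mscale (c U) U)"
      using rangeI[of "\<lambda>c. \<Sum>U\<in>S. mscale (c U) U" ?c] by simp
  qed
qed (use assms in \<open>auto simp: cspan_def\<close>)

lemma cspan_mscale:
  assumes "finite S" "Z \<in> cspan S"
  shows "mscale a Z \<in> cspan S"
proof -
  obtain c where "Z = (\<Sum>U\<in>S. mscale (c U) U)" using assms by (auto simp: cspan_finite)
  then have "mscale a Z = (\<Sum>U\<in>S. mscale (a * c U) U)" by (simp add: mscale_sum mscale_mscale)
  then show ?thesis using assms(1) by (auto simp: cspan_finite)
qed

lemma subspace_cspan:
  assumes "finite S"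
  shows "subspace (cspan S)"
  unfolding subspace_def
proof (intro conjI ballI allI)
  show "0 \<in> cspan S" unfolding cspan_def by (rule CollectI, rule exI[of _ "{}"]) simp
next
  fix X Y assume "X \<in> cspan S" "Y \<in> cspan S"
  then obtain c d where "X = (\<Sum>U\<in>S. mscale (c U) U)" "Y = (\<Sum>U\<in>S. mscale (d U) U)"
    using assms by (auto simp: cspan_finite)
  then have "X + Y = (\<Sum>U\<in>S. mscale (c U + d U) U)" by (simp add: mscale_add_left sum.distrib)
  then show "X + Y \<in> cspan S" using assms by (auto simp: cspan_finite)
next
  fix a :: real and X assume "X \<in> cspan S"
  then show "a *\<^sub>R X \<in> cspan S" using cspan_mscale[OF assms] by (simp flip: mscale_of_real)
qed

lemma proj_atoms_in_cspan: "finite \<Psi> \<Longrightarrow> proj_atoms \<Psi> X \<in> cspan \<Psi>"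
  unfolding proj_atoms_def
  using orth_proj_onto_in_orthogonal[OF subspace_cspan cspan_mscale] by blast

lemma proj_atoms_fixes: "finite \<Psi> \<Longrightarrow> Y \<in> cspan \<Psi> \<Longrightarrow> proj_atoms \<Psi> Y = Y"
  unfolding proj_atoms_def by (rule orth_proj_onto_fixes[OF subspace_cspan cspan_mscale])

lemma proj_atoms_inner_commute: "finite \<Psi> \<Longrightarrow> proj_atoms \<Psi> X \<bullet> Y = X \<bullet> proj_atoms \<Psi> Y"
  unfolding proj_atoms_def by (rule orth_proj_onto_inner_commute[OF subspace_cspan cspan_mscale])

lemma (in finite_dimensional_vector_space) dim_UN_le:
  assumes "finite F"
  shows "dim (\<Union>i\<in>F. S i) \<le> (\<Sum>i\<in>F. dim (S i))"
proof -
  have "\<forall>i. \<exists>B. B \<subseteq> S i \<and> independent B \<and> S i \<subseteq> span B \<and> card B = dim (S i)"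
    using basis_exists by metis
  then obtain B where B: "\<And>i. B i \<subseteq> S i \<and> independent (B i) \<and> S i \<subseteq> span (B i) \<and> card (B i) = dim (S i)"
    by metis
  have "(\<Union>i\<in>F. S i) \<subseteq> span (\<Union>i\<in>F. B i)"
  proof (rule UN_least)
    fix i assume "i \<in> F"
    then have "span (B i) \<subseteq> span (\<Union>i\<in>F. B i)" by (intro span_mono) blast
    then show "S i \<subseteq> span (\<Union>i\<in>F. B i)" using B[of i] by blast
  qed
  moreover have "finite (\<Union>i\<in>F. B i)" using assms B finiteI_independent by blast
  ultimately have "dim (\<Union>i\<in>F. S i) \<le> card (\<Union>i\<in>F. B i)" by (rule dim_le_card)
  also have "\<dots> \<le> (\<Sum>i\<in>F. card (B i))" by (rule card_UN_le[OF assms])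
  finally show ?thesis using B by simp
qed

lemma rows_lincomb_subset:
  "rows (\<Sum>U\<in>F. mscale (c U) U) \<subseteq> vec.span (\<Union>U\<in>F. rows U)"
proof
  fix x assume "x \<in> rows (\<Sum>U\<in>F. mscale (c U) U)"
  then obtain i where "x = row i (\<Sum>U\<in>F. mscale (c U) U)" by (auto simp: rows_def)
  also have "\<dots> = (\<Sum>U\<in>F. c U *s row i U)"
    by (induction F rule: infinite_finite_induct) (simp_all add: row_def mscale_def vec_eq_iff)
  finally have x: "x = (\<Sum>U\<in>F. c U *s row i U)" .
  have "c U *s row i U \<in> vec.span (\<Union>U\<in>F. rows U)" if "U \<in> F" for U
    using that by (intro vec.span_scale vec.span_base) (auto simp: rows_def)
  then show "x \<in> vec.span (\<Union>U\<in>F. rows U)" unfolding x by (rule vec.span_sum)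
qed

lemma rank_lincomb_le:
  fixes F :: "(complex^'n^'m) set"
  assumes "finite F"
  shows "rank (\<Sum>U\<in>F. mscale (c U) U) \<le> (\<Sum>U\<in>F. rank U)"
  unfolding row_rank_def_gen
  using vec.dim_mono[OF rows_lincomb_subset] vec.dim_UN_le[OF assms] by (rule order_trans)

lemma rank_le_card_if_in_cspan_atoms:
  assumes "atom_set Ats" "\<Psi> \<subseteq> Ats" "finite \<Psi>" "Y \<in> cspan \<Psi>"
  shows "rank Y \<le> card \<Psi>"
proof -
  obtain F c where F: "finite F" "F \<subseteq> \<Psi>" "Y = (\<Sum>U\<in>F. mscale (c U) U)"
    using assms(4) by (auto simp: cspan_def)
  have "rank Y \<le> (\<Sum>U\<in>F. rank U)" using F by (simp add: rank_lincomb_le)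
  also have "\<dots> = card F"
    using F assms(1,2) by (auto simp: atom_set_def subset_iff)
  also have "\<dots> \<le> card \<Psi>" using F assms(3) by (simp add: card_mono)
  finally show ?thesis .
qed

lemma ric_lower_bound:
  fixes A :: "complex^'n^'m \<Rightarrow> complex^'p"
  assumes "clinear_op A" "rank X \<le> r"
  shows "(1 - ric A r) * (norm X)\<^sup>2 \<le> (norm (A X))\<^sup>2"
proof -
  let ?D = "{\<delta>. \<delta> \<ge> 0 \<and> (\<forall>X::complex^'n^'m. rank X \<le> r \<longrightarrow>
      (1 - \<delta>) * (frob_norm X)\<^sup>2 \<le> (vnorm (A X))\<^sup>2 \<and> (vnorm (A X))\<^sup>2 \<le> (1 + \<delta>) * (frob_norm X)\<^sup>2)}"
  obtain K where K: "\<And>X. norm (A X) \<le> norm X * K"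
    using bounded_linear.pos_bounded assms(1) clinear_op_imp_linear linear_conv_bounded_linear
    by blast
  have "(norm (A X))\<^sup>2 \<le> (1 + (1 + K\<^sup>2)) * (norm X)\<^sup>2" for X
  proof -
    have "(norm (A X))\<^sup>2 \<le> (norm X * K)\<^sup>2" using K[of X] by (simp add: power_mono)
    also have "\<dots> = K\<^sup>2 * (norm X)\<^sup>2" by (simp add: power_mult_distrib)
    also have "\<dots> \<le> (1 + (1 + K\<^sup>2)) * (norm X)\<^sup>2" by (intro mult_right_mono) simp_all
    finally show ?thesis .
  qed
  moreover have "(1 - (1 + K\<^sup>2)) * (norm X)\<^sup>2 \<le> (norm (A X))\<^sup>2" for X
    by (simp add: order_trans[OF _ zero_le_power2])
  ultimately have "1 + K\<^sup>2 \<in> ?D" by (simp add: frob_norm_eq_norm vnorm_eq_norm)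
  then have nonempty: "?D \<noteq> {}" by blast
  show ?thesis
  proof (cases "X = 0")
    case False
    then have pos: "(norm X)\<^sup>2 > 0" by simp
    have "1 - (norm (A X))\<^sup>2 / (norm X)\<^sup>2 \<le> Inf ?D"
    proof (rule cInf_greatest[OF nonempty])
      fix \<delta> assume "\<delta> \<in> ?D"
      then have "(1 - \<delta>) * (norm X)\<^sup>2 \<le> (norm (A X))\<^sup>2"
        using assms(2) by (simp add: frob_norm_eq_norm vnorm_eq_norm)
      then show "1 - (norm (A X))\<^sup>2 / (norm X)\<^sup>2 \<le> \<delta>" using pos by (simp add: field_simps)
    qed
    then show ?thesis using pos unfolding ric_def by (simp add: field_simps)
  qed simp
qed

lemma mult_norm_le_norm_if_inner_ge:
  fixes y w :: "'a::real_inner"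
  assumes "c * (norm y)\<^sup>2 \<le> w \<bullet> y"
  shows "c * norm y \<le> norm w"
proof (cases "y = 0")
  case False
  have "(c * norm y) * norm y \<le> norm w * norm y"
    using assms norm_cauchy_schwarz[of w y] by (simp add: power2_eq_square mult.assoc)
  then show ?thesis using False by simp
qed simp

theorem proposition4:
  fixes A :: "complex^'n^'m \<Rightarrow> complex^'p"
    and r :: nat
    and Ats \<Psi> :: "(complex^'n^'m) set"
    and P :: "complex^'n^'m \<Rightarrow> complex^'n^'m"
  assumes "clinear_op A"
    and "atom_set Ats"
    and "\<Psi> \<subseteq> Ats" and "finite \<Psi>" and "card \<Psi> \<le> r"
    and "is_orth_projection P"
    and "P \<circ> proj_atoms \<Psi> = proj_atoms \<Psi> \<circ> P"
  shows "\<forall>X. (1 - ric A r) * frob_norm (P (proj_atoms \<Psi> X))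
           \<le> frob_norm (P (proj_atoms \<Psi> (adjoint_op A (A (P (proj_atoms \<Psi> X))))))"
proof
  fix X
  let ?Q = "proj_atoms \<Psi>"
  define Y where "Y = P (?Q X)"
  define B where "B = adjoint A (A Y)"
  have "Y = ?Q (P X)" using fun_cong[OF assms(7)] by (simp add: Y_def)
  then have Y_in_span: "Y \<in> cspan \<Psi>" using proj_atoms_in_cspan[OF assms(4)] by simp
  have P_fixes_Y: "P Y = Y" using assms(6) by (simp add: Y_def is_orth_projection_def)
  have "rank Y \<le> r"
    using rank_le_card_if_in_cspan_atoms[OF assms(2-4) Y_in_span] assms(5) by simp
  then have "(1 - ric A r) * (norm Y)\<^sup>2 \<le> (norm (A Y))\<^sup>2" by (rule ric_lower_bound[OF assms(1)])
  also have "\<dots> = B \<bullet> Y"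
    using adjoint_works[OF clinear_op_imp_linear[OF assms(1)], of Y "A Y"]
    by (simp add: B_def inner_commute power2_norm_eq_inner)
  also have "\<dots> = P (?Q B) \<bullet> Y"
    using is_orth_projection_inner_commute[OF assms(6)] proj_atoms_inner_commute[OF assms(4)]
      proj_atoms_fixes[OF assms(4) Y_in_span] P_fixes_Y by metis
  finally have "(1 - ric A r) * norm Y \<le> norm (P (?Q B))" by (rule mult_norm_le_norm_if_inner_ge)
  then show "(1 - ric A r) * frob_norm (P (?Q X)) \<le> frob_norm (P (?Q (adjoint_op A (A (P (?Q X))))))"
    by (simp add: frob_norm_eq_norm adjoint_op_eq_adjoint[OF assms(1)] B_def flip: Y_def)
qed

end
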